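(* Let $k\geq 1$ be an integer. For every integer $n$ with $2^{k-1}<n<2^k$, the minimal Colless index satisfies $c_n<2^{k-1}$; i.e. $\max_{n\in(2^{k-1},2^k)}c_n<2^{k-1}$.
   Context: A rooted binary tree with $n\geq 2$ leaves is a rooted tree whose root has degree 2 and all other internal nodes have degree 3; for $n=1$ it is a single node. For an internal node $v$ with children $v_1,v_2$, let $\kappa(v_i)$ be the number of leaves descending from $v_i$ ($1$ if a leaf). The Colless index is $\mathcal{C}(T)=\sum_v|\kappa(v_1)-\kappa(v_2)|$ over internal nodes $v$; $c_n$ is its minimum over all rooted binary trees with $n$ leaves. *)

theory Defs
  imports Main
begin

text \<open>Rooted binary trees (unordered in the paper; ordering of children is irrelevant
for the Colless index).\<close>
datatype btree = Leaf | Node btree btree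

fun leaves :: "btree \<Rightarrow> nat" where
  "leaves Leaf = 1"
| "leaves (Node l r) = leaves l + leaves r"

fun colless :: "btree \<Rightarrow> nat" where
  "colless Leaf = 0"
| "colless (Node l r) = colless l + colless r
     + nat \<bar>int (leaves l) - int (leaves r)\<bar>"

definition min_colless :: "nat \<Rightarrow> nat" where
  "min_colless n = (LEAST c. \<exists>t. leaves t = n \<and> colless t = c)"

end

theory Submission
  imports Defs
begin

text \<open>The maximally balanced tree, splitting \<open>n\<close> leaves into \<open>\<lceil>n/2\<rceil>\<close> and \<open>\<lfloor>n/2\<rfloor>\<close>,
  has Colless index at most \<open>\<lfloor>(n-1)/2\<rfloor>\<close>: every internal node contributes at most 1, and
  the two halves of an odd split have opposite parity, so only one of them can carry the
  rounding loss. Hence \<open>c\<^sub>n \<le> \<lfloor>(n-1)/2\<rfloor> < 2\<^sup>k\<^sup>-\<^sup>1\<close> already for all \<open>1 \<le> n < 2\<^sup>k\<close>.\<close>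

fun balanced_tree :: "nat \<Rightarrow> btree" where
  "balanced_tree n =
     (if n \<le> 1 then Leaf else Node (balanced_tree (n - n div 2)) (balanced_tree (n div 2)))"

declare balanced_tree.simps [simp del]

lemma balanced_tree_Node:
  "n \<ge> 2 \<Longrightarrow> balanced_tree n = Node (balanced_tree (n - n div 2)) (balanced_tree (n div 2))"
  by (simp add: balanced_tree.simps)

lemma leaves_balanced_tree: "n \<ge> 1 \<Longrightarrow> leaves (balanced_tree n) = n"
proof (induction n rule: less_induct)
  case (less n)
  show ?case
  proof (cases "n \<le> 1")
    case True
    then show ?thesis using less.prems by (simp add: balanced_tree.simps)
  next
    case False
    then show ?thesis by (simp add: balanced_tree_Node less.IH)
  qed
qed

lemma colless_balanced_tree: "n \<ge> 1 \<Longrightarrow> colless (balanced_tree n) \<le> (n - 1) div 2"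
proof (induction n rule: less_induct)
  case (less n)
  show ?case
  proof (cases "n \<le> 1")
    case True
    then show ?thesis by (simp add: balanced_tree.simps)
  next
    case False
    define a b where "a = n - n div 2" and "b = n div 2"
    have split: "a + b = n" "a = b \<or> a = b + 1"
      unfolding a_def b_def by auto
    have smaller: "1 \<le> a" "1 \<le> b" "a < n" "b < n"
      using False unfolding a_def b_def by auto
    have "balanced_tree n = Node (balanced_tree a) (balanced_tree b)"
      using False unfolding a_def b_def by (simp add: balanced_tree_Node)
    moreover have "leaves (balanced_tree a) = a" "leaves (balanced_tree b) = b"
      using smaller by (simp_all add: leaves_balanced_tree)
    ultimately have "colless (balanced_tree n)
        = colless (balanced_tree a) + colless (balanced_tree b) + (a - b)"
      using split by auto
    also have "\<dots> \<le> (a - 1) div 2 + (b - 1) div 2 + (a - b)"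
      using smaller by (intro add_mono less.IH) auto
    also have "\<dots> \<le> (a + b - 1) div 2"
      using split(2)
    proof
      assume "a = b"
      then show ?thesis by linarith
    next
      assume "a = b + 1"
      then show ?thesis
        using smaller by (cases "even b") (auto elim!: evenE oddE)
    qed
    finally show ?thesis
      using split(1) by simp
  qed
qed

lemma min_colless_le: "min_colless (leaves t) \<le> colless t"
  unfolding min_colless_def by (rule Least_le) blast

theorem lemma8:
  fixes k n :: nat
  assumes "k \<ge> 1" and "2 ^ (k - 1) < n" and "n < 2 ^ k"
  shows "min_colless n < 2 ^ (k - 1)"
proof -
  have "n \<ge> 1" using assms(2) by simp
  then have "min_colless n \<le> (n - 1) div 2"
    using min_colless_le [of "balanced_tree n"] colless_balanced_tree
    by (simp add: leaves_balanced_tree order_trans)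
  moreover have "(2::nat) ^ k = 2 * 2 ^ (k - 1)"
    using assms(1) by (cases k) simp_all
  ultimately show ?thesis using assms(3) by linarith
qed

end
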